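(* Let $(\eta_t)_{t\ge1}$ and $(\gamma_t)_{t\ge1}$ be non-increasing sequences of positive learning rates and exploration factors with $\eta_t\le2\gamma_t$ for all $t$. With probability at least $1-\delta$, FTARLShannon guarantees $$\max_{a\in[K]}\mathrm{Regret}(a)\le\frac{\ln K}{\eta_T}+\frac{\ln(3K/\delta)}{2\gamma_T}+\ln(3/\delta)+\sum_{t=1}^T\Big(\frac{\eta_t}{2}+\gamma_t\Big)A_t.$$
   Context: Sleeping bandits with $K\ge2$ arms: in round $t$ an adaptive (non-oblivious) adversary reveals a set $\mathbb A_t\subseteq[K]$ of active arms (with $A_t=|\mathbb A_t|$) and selects losses $\ell_{i,t}\in[0,1]$; the learner pulls $i_t\in\mathbb A_t$ and observes $\hat\ell_t=\ell_{i_t,t}$. With $I_{i,t}=\mathbb 1\{i\in\mathbb A_t\}$, $\mathrm{Regret}(a)=\sum_{t=1}^TI_{a,t}(\ell_{i_t,t}-\ell_{a,t})$. FTARLShannon: $\tilde L_{i,0}=0$; in round $t$, $q_{i,t}=\frac{\exp(-\eta_t\tilde L_{i,t-1})}{\sum_j\exp(-\eta_t\tilde L_{j,t-1})}$, $p_{i,t}=\frac{I_{i,t}q_{i,t}}{\sum_jI_{j,t}q_{j,t}}$, draw $i_t\sim p_t$; set $\tilde\ell_{i,t}=\frac{\mathbb 1\{i_t=i\}\hat\ell_t}{p_{i,t}+\gamma_t}$ for active $i$ and $\tilde\ell_{i,t}=\hat\ell_t-\gamma_t\sum_{j\in\mathbb A_t}\tilde\ell_{j,t}$ for inactive $i$;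 update $\tilde L_{i,t}=\tilde L_{i,t-1}+\tilde\ell_{i,t}$. *)

theory Defs
  imports "HOL-Probability.Probability"
begin

text \<open>Arms are 0..K-1 (i.e. [K] = {..<K}).
Rounds are numbered 1,2,... . A history is the list of the learner's past pulls
(i_1,...,i_{t-1}); since the learner is deterministic given its past pulls and the
adversary's reactions, this list determines the whole interaction.
An adaptive adversary is given by
  Act t h  : the active set of round t, given the past pulls h,
  ell t h  : the loss vector of round t, given the past pulls h.\<close>

definition qprob :: "nat \<Rightarrow> (nat \<Rightarrow> real) \<Rightarrow> nat \<Rightarrow> (nat \<Rightarrow> real) \<Rightarrow> nat \<Rightarrow> real" where
  "qprob K eta t L i = exp (- eta t * L i) / (\<Sum>j<K. exp (- eta t * L j))"

definition pprob :: "nat \<Rightarrow> (nat \<Rightarrow> real) \<Rightarrow> nat set \<Rightarrow> nat \<Rightarrow> (nat \<Rightarrow> real) \<Rightarrow> nat \<Rightarrow> real" where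
  "pprob K eta A t L i =
     (if i \<in> A then qprob K eta t L i else 0) / (\<Sum>j\<in>A. qprob K eta t L j)"

definition est :: "nat \<Rightarrow> (nat \<Rightarrow> real) \<Rightarrow> (nat \<Rightarrow> real) \<Rightarrow> nat set \<Rightarrow> nat \<Rightarrow>
    (nat \<Rightarrow> real) \<Rightarrow> (nat \<Rightarrow> real) \<Rightarrow> nat \<Rightarrow> nat \<Rightarrow> real" where
  "est K eta gamma A t L l i j =
     (let act = (\<lambda>k. if k = i then l i / (pprob K eta A t L k + gamma t) else 0)
      in if j \<in> A then act j else l i - gamma t * (\<Sum>k\<in>A. act k))"

primrec Lcum :: "nat \<Rightarrow> (nat \<Rightarrow> real) \<Rightarrow> (nat \<Rightarrow> real) \<Rightarrow> (nat \<Rightarrow> nat list \<Rightarrow> nat set) \<Rightarrow>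
    (nat \<Rightarrow> nat list \<Rightarrow> nat \<Rightarrow> real) \<Rightarrow> nat \<Rightarrow> nat list \<Rightarrow> nat \<Rightarrow> real" where
  "Lcum K eta gamma Act ell 0 hs = (\<lambda>j. 0)"
| "Lcum K eta gamma Act ell (Suc s) hs =
     (let L = Lcum K eta gamma Act ell s hs
      in (\<lambda>j. L j + est K eta gamma (Act (Suc s) (take s hs)) (Suc s) L
                        (ell (Suc s) (take s hs)) (hs ! s) j))"

text \<open>Sampling distribution p_t of round t = Suc s given past pulls h (length s).\<close>
definition pdist :: "nat \<Rightarrow> (nat \<Rightarrow> real) \<Rightarrow> (nat \<Rightarrow> real) \<Rightarrow> (nat \<Rightarrow> nat list \<Rightarrow> nat set) \<Rightarrow>
    (nat \<Rightarrow> nat list \<Rightarrow> nat \<Rightarrow> real) \<Rightarrow> nat \<Rightarrow> nat list \<Rightarrow> nat pmf" where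
  "pdist K eta gamma Act ell s h =
     embed_pmf (\<lambda>i. pprob K eta (Act (Suc s) h) (Suc s)
                       (Lcum K eta gamma Act ell s h) i)"

primrec play :: "nat \<Rightarrow> (nat \<Rightarrow> real) \<Rightarrow> (nat \<Rightarrow> real) \<Rightarrow> (nat \<Rightarrow> nat list \<Rightarrow> nat set) \<Rightarrow>
    (nat \<Rightarrow> nat list \<Rightarrow> nat \<Rightarrow> real) \<Rightarrow> nat \<Rightarrow> nat list pmf" where
  "play K eta gamma Act ell 0 = return_pmf []"
| "play K eta gamma Act ell (Suc s) =
     bind_pmf (play K eta gamma Act ell s)
       (\<lambda>h. map_pmf (\<lambda>i. h @ [i]) (pdist K eta gamma Act ell s h))"

definition regret :: "(nat \<Rightarrow> nat list \<Rightarrow> nat set) \<Rightarrow> (nat \<Rightarrow> nat list \<Rightarrow> nat \<Rightarrow> real) \<Rightarrow>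
    nat \<Rightarrow> nat list \<Rightarrow> nat \<Rightarrow> real" where
  "regret Act ell T hs a =
     (\<Sum>t=1..T. (if a \<in> Act t (take (t - 1) hs) then 1 else 0) *
        (ell t (take (t - 1) hs) (hs ! (t - 1)) - ell t (take (t - 1) hs) a))"

end

theory Submission
  imports Defs
begin

text \<open>FTARL runs exponential weights over all arms but samples only among the active ones. An
  inactive arm is charged the \<open>q\<^sub>t\<close>-mean of the loss estimates, so it incurs no estimated
  regret, and the potential argument for exponential weights with non-increasing learning rates
  bounds the estimated regret against any arm by \<open>ln K / \<eta>\<^sub>T + \<Sum>\<^sub>t \<eta>\<^sub>t/2 S\<^sub>t\<close>,
  where \<open>S\<^sub>t\<close> is the total estimated loss of the active arms. The loss of the pulled arm is
  that \<open>q\<^sub>t\<close>-mean plus \<open>\<gamma>\<^sub>t S\<^sub>t\<close>, so the regret against arm \<open>a\<close> is at most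
  \<open>ln K / \<eta>\<^sub>T + \<Sum>\<^sub>t (\<eta>\<^sub>t/2 + \<gamma>\<^sub>t) S\<^sub>t\<close> plus the estimation error of
  \<open>a\<close>. Thanks to the implicit exploration term \<open>\<gamma>\<^sub>t\<close> in the denominator of the
  estimates, the exponential of any estimation error weighted by coefficients in
  \<open>[0, 2\<gamma>\<^sub>t]\<close> has expectation at most one. By Markov's inequality the weighted error of
  the active arms exceeds \<open>ln (3/\<delta>)\<close> with probability at most \<open>\<delta>/3\<close>, and
  \<open>2\<gamma>\<^sub>T\<close> times the error of arm \<open>a\<close> exceeds \<open>ln (3K/\<delta>)\<close> with probability
  at most \<open>\<delta>/(3K)\<close>; a union bound over these \<open>K + 1\<close> events concludes.\<close>

lemma exp_minus_le_quadratic: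
  fixes x :: real assumes "0 \<le> x" shows "exp (- x) \<le> 1 - x + x\<^sup>2 / 2"
proof -
  let ?f = "\<lambda>x::real. 1 - x + x\<^sup>2 / 2 - exp (- x)"
  have "?f 0 \<le> ?f x"
  proof (rule DERIV_nonneg_imp_nondecreasing[OF assms])
    fix y :: real
    have "DERIV ?f y :> - 1 + y + exp (- y)"
      by (auto intro!: derivative_eq_intros simp: power2_eq_square)
    moreover have "0 \<le> - 1 + y + exp (- y)"
      using exp_ge_add_one_self[of "- y"] by linarith
    ultimately show "\<exists>d. DERIV ?f y :> d \<and> 0 \<le> d" by blast
  qed
  then show ?thesis by simp
qed

lemma ln_one_plus_ge:
  fixes z :: real assumes "0 \<le> z" shows "2 * z / (2 + z) \<le> ln (1 + z)"
proof -
  let ?f = "\<lambda>z::real. ln (1 + z) - 2 * z / (2 + z)"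
  have "?f 0 \<le> ?f z"
  proof (rule DERIV_nonneg_imp_nondecreasing[OF assms])
    fix y :: real assume y: "0 \<le> y"
    have "DERIV ?f y :> 1 / (1 + y) - 4 / (2 + y)\<^sup>2"
      using y by (auto intro!: derivative_eq_intros simp: power2_eq_square field_simps)
    moreover have "4 / (2 + y)\<^sup>2 \<le> 1 / (1 + y)"
      using y by (simp add: divide_simps power2_eq_square algebra_simps)
    ultimately show "\<exists>d. DERIV ?f y :> d \<and> 0 \<le> d" by force
  qed
  then show ?thesis by simp
qed

lemma exp_mult_le_chord:
  fixes r y :: real assumes "0 \<le> r" "r \<le> 1" shows "exp (r * y) \<le> 1 + r * (exp y - 1)"
  using convex_onD[OF exp_convex, of r 0 y] assms by (simp add: algebra_simps)

text \<open>The shift by \<open>g\<close> in the denominator pays for the exponential: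
  \<open>x / (p + g) \<le> 2z / (2 + z) \<le> ln (1 + z)\<close> with \<open>z = x / p\<close>.\<close>
lemma exp_implicit_exploration_le:
  fixes x p g :: real
  assumes x: "0 \<le> x" "x \<le> 2 * g" and p: "0 < p" and g: "0 < g"
  shows "exp (x / (p + g)) \<le> 1 + x / p"
proof -
  have "x * x \<le> x * (2 * g)" using x by (intro mult_left_mono) auto
  then have "x / (p + g) \<le> 2 * (x / p) / (2 + x / p)"
    using x p g by (simp add: field_simps)
  also have "\<dots> \<le> ln (1 + x / p)" using x p by (intro ln_one_plus_ge) simp
  finally have "exp (x / (p + g)) \<le> exp (ln (1 + x / p))" by simp
  also have "\<dots> = 1 + x / p" using x p by (intro exp_ln) (simp add: add_pos_nonneg)
  finally show ?thesis .
qed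

lemma implicit_exploration_exp_moment:
  fixes A :: "nat set" and p a l :: "nat \<Rightarrow> real" and g :: real
  assumes A: "finite A" and p: "\<And>i. i \<in> A \<Longrightarrow> 0 < p i" and p_sum: "(\<Sum>i\<in>A. p i) = 1"
    and g: "0 < g" and a: "\<And>j. j \<in> A \<Longrightarrow> 0 \<le> a j \<and> a j \<le> 2 * g"
    and l: "\<And>j. j \<in> A \<Longrightarrow> 0 \<le> l j \<and> l j \<le> 1"
  shows "(\<Sum>i\<in>A. exp (\<Sum>j\<in>A. a j * ((if j = i then l i / (p i + g) else 0) - l j)) * p i) \<le> 1"
proof -
  define M where "M = (\<Sum>j\<in>A. a j * l j)"
  have "exp (\<Sum>j\<in>A. a j * ((if j = i then l i / (p i + g) else 0) - l j)) * p i
      \<le> (p i + a i * l i) * exp (- M)" if i: "i \<in> A" for i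
  proof -
    have "(\<Sum>j\<in>A. a j * ((if j = i then l i / (p i + g) else 0) - l j))
        = (\<Sum>j\<in>A. (if j = i then a i * l i / (p i + g) else 0) - a j * l j)"
      by (rule sum.cong) (auto simp: right_diff_distrib)
    also have "\<dots> = a i * l i / (p i + g) - M"
      using A i by (simp add: sum_subtractf M_def)
    finally have "exp (\<Sum>j\<in>A. a j * ((if j = i then l i / (p i + g) else 0) - l j)) * p i
        = exp (a i * l i / (p i + g) - M) * p i" by simp
    also have "\<dots> = exp (a i * l i / (p i + g)) * p i * exp (- M)"
      by (simp add: exp_diff exp_minus divide_inverse mult_ac)
    also have "\<dots> \<le> (1 + a i * l i / p i) * p i * exp (- M)"
    proof (intro mult_right_mono exp_implicit_exploration_le)
      show "a i * l i \<le> 2 * g"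
        using a[OF i] l[OF i] mult_mono[of "a i" "2 * g" "l i" 1] by simp
    qed (use a[OF i] l[OF i] p[OF i] g in auto)
    also have "\<dots> = (p i + a i * l i) * exp (- M)"
      using p[OF i] by (simp add: field_simps)
    finally show ?thesis .
  qed
  then have "(\<Sum>i\<in>A. exp (\<Sum>j\<in>A. a j * ((if j = i then l i / (p i + g) else 0) - l j)) * p i)
      \<le> (\<Sum>i\<in>A. (p i + a i * l i) * exp (- M))" by (rule sum_mono)
  also have "\<dots> = (1 + M) * exp (- M)"
    by (simp add: M_def sum_distrib_right[symmetric] sum.distrib p_sum)
  also have "\<dots> \<le> exp M * exp (- M)"
    using exp_ge_add_one_self[of M] by (intro mult_right_mono) auto
  finally show ?thesis by (simp add: exp_minus)
qed

lemma (in prob_space) prob_exp_moment_tail: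
  assumes [measurable]: "Y \<in> borel_measurable M" and int: "integrable M (\<lambda>x. exp (Y x))"
    and E: "expectation (\<lambda>x. exp (Y x)) \<le> 1" and \<epsilon>: "0 < \<epsilon>"
  shows "prob {x \<in> space M. ln (1 / \<epsilon>) < Y x} \<le> \<epsilon>"
proof -
  have "prob {x \<in> space M. ln (1 / \<epsilon>) < Y x} \<le> prob {x \<in> space M. 1 / \<epsilon> \<le> exp (Y x)}"
  proof (rule finite_measure_mono)
    have "1 / \<epsilon> < exp (Y x)" if "ln (1 / \<epsilon>) < Y x" for x
      using exp_less_mono[OF that] \<epsilon> by simp
    then show "{x \<in> space M. ln (1 / \<epsilon>) < Y x} \<subseteq> {x \<in> space M. 1 / \<epsilon> \<le> exp (Y x)}"
      by (auto intro: less_imp_le)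
  qed measurable
  also have "\<dots> \<le> expectation (\<lambda>x. exp (Y x)) / (1 / \<epsilon>)"
    by (rule integral_Markov_inequality_measure[OF int, where A = "{}"]) (use \<epsilon> in auto)
  also have "\<dots> \<le> \<epsilon>" using E \<epsilon> by (simp add: mult_left_le)
  finally show ?thesis .
qed

lemma prob_ge_one_minus_of_set_pmf_diff:
  assumes "set_pmf p - B \<subseteq> A"
  shows "1 - measure_pmf.prob p B \<le> measure_pmf.prob p A"
proof -
  have "1 - measure_pmf.prob p B = measure_pmf.prob p ((UNIV - B) \<inter> set_pmf p)"
    using measure_pmf.prob_compl[of B p] by (simp add: measure_Int_set_pmf)
  also have "\<dots> \<le> measure_pmf.prob p A"
    using assms by (intro measure_pmf.finite_measure_mono) auto
  finally show ?thesis .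
qed

section \<open>Exponential weights with decreasing learning rates\<close>

definition softmax :: "nat \<Rightarrow> real \<Rightarrow> (nat \<Rightarrow> real) \<Rightarrow> nat \<Rightarrow> real" where
  "softmax K x L i = exp (- x * L i) / (\<Sum>j<K. exp (- x * L j))"

definition exp_potential :: "nat \<Rightarrow> real \<Rightarrow> (nat \<Rightarrow> real) \<Rightarrow> real" where
  "exp_potential K x L = ln ((\<Sum>j<K. exp (- x * L j)) / real K) / x"

lemma sum_exp_pos: "0 < K \<Longrightarrow> 0 < (\<Sum>j<(K::nat). exp (f j :: real))"
  by (intro sum_pos) auto

lemma softmax_pos: "0 < K \<Longrightarrow> 0 < softmax K x L i"
  unfolding softmax_def by (simp add: sum_exp_pos)

lemma sum_softmax: "0 < K \<Longrightarrow> (\<Sum>i<K. softmax K x L i) = 1"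
  unfolding softmax_def using sum_exp_pos[of K "\<lambda>j. - x * L j"]
  by (simp add: sum_divide_distrib[symmetric])

lemma exp_potential_zero: "0 < K \<Longrightarrow> exp_potential K x (\<lambda>j. 0) = 0"
  unfolding exp_potential_def by simp

text \<open>The potential is the logarithm of a power mean of the \<open>exp (- L j)\<close> of order \<open>x\<close>,
  hence grows with \<open>x\<close>; this is what allows the learning rate to decrease.\<close>
lemma exp_potential_mono:
  assumes K: "0 < K" and x': "0 < x'" and xx': "x' \<le> x"
  shows "exp_potential K x' L \<le> exp_potential K x L"
proof -
  define r where "r = x' / x"
  have x: "0 < x" and r: "0 \<le> r" "r \<le> 1" using x' xx' by (auto simp: r_def)
  define m where "m = (\<Sum>j<K. exp (- x * L j)) / real K"
  have m: "0 < m" unfolding m_def using K by (simp add: sum_exp_pos)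
  have "exp (- x' * L j) / exp (r * ln m) \<le> 1 + r * (exp (- x * L j) / m - 1)" for j
  proof -
    have "exp (r * (- x * L j - ln m)) \<le> 1 + r * (exp (- x * L j - ln m) - 1)"
      by (rule exp_mult_le_chord[OF r])
    then show ?thesis using x m by (simp add: r_def exp_diff right_diff_distrib)
  qed
  then have "(\<Sum>j<K. exp (- x' * L j)) / exp (r * ln m) \<le> (\<Sum>j<K. 1 + r * (exp (- x * L j) / m - 1))"
    by (simp add: sum_divide_distrib sum_mono)
  also have "\<dots> = real K"
  proof -
    have "(\<Sum>j<K. exp (- x * L j)) / m = real K"
      using K sum_exp_pos[OF K, of "\<lambda>j. - x * L j"] by (simp add: m_def)
    then show ?thesis
      by (simp add: sum.distrib sum_subtractf sum_distrib_left[symmetric] sum_divide_distrib[symmetric])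
  qed
  finally have "(\<Sum>j<K. exp (- x' * L j)) / real K \<le> exp (r * ln m)"
    using K by (simp add: divide_le_eq mult.commute)
  then have "ln ((\<Sum>j<K. exp (- x' * L j)) / real K) \<le> ln (exp (r * ln m))"
    using K sum_exp_pos[OF K, of "\<lambda>j. - x' * L j"] by (intro ln_mono) auto
  then have "exp_potential K x' L \<le> r * ln m / x'"
    unfolding exp_potential_def ln_exp by (rule divide_right_mono) (use x' in simp)
  also have "r * ln m / x' = exp_potential K x L"
    unfolding exp_potential_def m_def r_def using x x' by simp
  finally show ?thesis .
qed

lemma exp_potential_step:
  assumes K: "0 < K" and x: "0 < x" and g: "\<And>j. j < K \<Longrightarrow> 0 \<le> g j"
  shows "(\<Sum>j<K. softmax K x L j * g j) - x / 2 * (\<Sum>j<K. softmax K x L j * (g j)\<^sup>2)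
     \<le> exp_potential K x L - exp_potential K x (\<lambda>j. L j + g j)"
proof -
  define W where "W = (\<Sum>j<K. exp (- x * L j))"
  define Z where "Z = (\<Sum>j<K. softmax K x L j * exp (- x * g j))"
  have W: "0 < W" unfolding W_def using K by (rule sum_exp_pos)
  have Z: "0 < Z" unfolding Z_def using K by (intro sum_pos) (auto intro!: mult_pos_pos softmax_pos)
  have "(\<Sum>j<K. exp (- x * (L j + g j))) = W * Z"
    using W by (simp add: W_def Z_def softmax_def sum_distrib_left distrib_left exp_add[symmetric])
  then have "exp_potential K x (\<lambda>j. L j + g j) - exp_potential K x L
      = (ln (W * Z / real K) - ln (W / real K)) / x"
    unfolding exp_potential_def W_def by (simp add: diff_divide_distrib)
  also have "\<dots> = ln Z / x" using W Z K by (simp add: ln_mult ln_div)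
  also have "\<dots> \<le> (Z - 1) / x"
    using ln_le_minus_one[OF Z] x by (simp add: divide_right_mono)
  also have "\<dots> \<le> - (\<Sum>j<K. softmax K x L j * g j) + x / 2 * (\<Sum>j<K. softmax K x L j * (g j)\<^sup>2)"
  proof -
    have "exp (- (x * g j)) \<le> 1 - x * g j + (x * g j)\<^sup>2 / 2" if "j < K" for j
      using exp_minus_le_quadratic[of "x * g j"] g[OF that] x by simp
    then have "Z \<le> (\<Sum>j<K. softmax K x L j * (1 - x * g j + (x * g j)\<^sup>2 / 2))"
      unfolding Z_def using less_imp_le[OF softmax_pos[OF K]]
      by (intro sum_mono mult_left_mono) auto
    also have "\<dots> = (\<Sum>j<K. softmax K x L j) - x * (\<Sum>j<K. softmax K x L j * g j)
        + x\<^sup>2 / 2 * (\<Sum>j<K. softmax K x L j * (g j)\<^sup>2)"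
      unfolding sum_distrib_left sum_subtractf[symmetric] sum.distrib[symmetric]
      by (rule sum.cong) (simp_all add: algebra_simps power2_eq_square)
    finally show ?thesis
      using x K by (simp add: sum_softmax divide_simps power2_eq_square algebra_simps)
  qed
  finally show ?thesis by simp
qed

lemma exp_potential_ge:
  assumes K: "0 < K" and x: "0 < x" and a: "a < K"
  shows "- exp_potential K x L \<le> L a + ln (real K) / x"
proof -
  have "exp (- x * L a) \<le> (\<Sum>j<K. exp (- x * L j))"
    using a by (intro member_le_sum) auto
  then have "- x * L a - ln (real K) \<le> ln ((\<Sum>j<K. exp (- x * L j)) / real K)"
    using K by (simp add: ln_div sum_exp_pos ln_ge_iff)
  then have "(- x * L a - ln (real K)) / x \<le> exp_potential K x L"
    unfolding exp_potential_def by (rule divide_right_mono) (use x in simp)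
  then show ?thesis using x by (simp add: field_simps)
qed

theorem exp_weights_regret:
  fixes g :: "nat \<Rightarrow> nat \<Rightarrow> real" and e :: "nat \<Rightarrow> real"
  assumes K: "0 < K" and e_pos: "\<And>s. 0 < e s" and e_antimono: "\<And>s s'. s \<le> s' \<Longrightarrow> e s' \<le> e s"
    and g: "\<And>s j. s < n \<Longrightarrow> j < K \<Longrightarrow> 0 \<le> g s j" and a: "a < K"
  shows "(\<Sum>s<n. (\<Sum>j<K. softmax K (e s) (\<lambda>j. \<Sum>r<s. g r j) j * g s j)
            - e s / 2 * (\<Sum>j<K. softmax K (e s) (\<lambda>j. \<Sum>r<s. g r j) j * (g s j)\<^sup>2))
         \<le> (\<Sum>s<n. g s a) + ln (real K) / e (n - 1)"
proof -
  let ?L = "\<lambda>s j. \<Sum>r<s. g r j"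
  let ?term = "\<lambda>s. (\<Sum>j<K. softmax K (e s) (?L s) j * g s j)
                   - e s / 2 * (\<Sum>j<K. softmax K (e s) (?L s) j * (g s j)\<^sup>2)"
  have "(\<Sum>s<m. ?term s) \<le> - exp_potential K (e (m - 1)) (?L m)" if "m \<le> n" for m
    using that
  proof (induction m)
    case 0
    then show ?case using exp_potential_zero[OF K] by simp
  next
    case (Suc m)
    have "?term m \<le> exp_potential K (e m) (?L m) - exp_potential K (e m) (?L (Suc m))"
      using exp_potential_step[OF K e_pos[of m], where g = "\<lambda>j. g m j" and L = "?L m"] g Suc.prems
      by simp
    moreover have "exp_potential K (e m) (?L m) \<le> exp_potential K (e (m - 1)) (?L m)"
      using K e_pos e_antimono by (intro exp_potential_mono) auto
    ultimately show ?case using Suc by simp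
  qed
  also have "- exp_potential K (e (n - 1)) (?L n) \<le> (\<Sum>s<n. g s a) + ln (real K) / e (n - 1)"
    using exp_potential_ge[OF K e_pos a] .
  finally show ?thesis by simp
qed

section \<open>A single round of FTARL\<close>

lemma qprob_eq_softmax: "qprob K eta t = softmax K (eta t)"
  by (simp add: fun_eq_iff qprob_def softmax_def)

lemma qprob_nonneg: "0 \<le> qprob K eta t L i"
  unfolding qprob_def by (simp add: sum_nonneg)

lemma pprob_nonneg: "0 \<le> pprob K eta A t L i"
  unfolding pprob_def by (simp add: qprob_nonneg sum_nonneg)

lemma pprob_notin: "i \<notin> A \<Longrightarrow> pprob K eta A t L i = 0"
  unfolding pprob_def by simp

lemma sum_qprob_pos:
  assumes "A \<subseteq> {..<K}" "i \<in> A" shows "0 < (\<Sum>j\<in>A. qprob K eta t L j)"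
proof (rule sum_pos2[where i = i])
  show "finite A" using assms finite_subset by blast
  show "0 < qprob K eta t L i" using assms by (auto simp: qprob_eq_softmax intro!: softmax_pos)
qed (use assms qprob_nonneg in auto)

lemma pprob_pos: "A \<subseteq> {..<K} \<Longrightarrow> i \<in> A \<Longrightarrow> 0 < pprob K eta A t L i"
  using sum_qprob_pos[of A K i eta t L]
  by (auto simp: pprob_def qprob_eq_softmax intro!: divide_pos_pos softmax_pos)

lemma sum_pprob: "A \<subseteq> {..<K} \<Longrightarrow> A \<noteq> {} \<Longrightarrow> (\<Sum>i\<in>A. pprob K eta A t L i) = 1"
  using sum_qprob_pos[of A K _ eta t L]
  by (auto simp: pprob_def sum_divide_distrib[symmetric] intro!: divide_self)

lemma est_active: "j \<in> A \<Longrightarrow>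
    est K eta gamma A t L l i j = (if j = i then l i / (pprob K eta A t L i + gamma t) else 0)"
  by (simp add: est_def)

context
  fixes K :: nat and eta gamma :: "nat \<Rightarrow> real" and A :: "nat set"
    and t i :: nat and L l :: "nat \<Rightarrow> real"
  assumes A: "A \<subseteq> {..<K}" and i: "i \<in> A" and gamma: "0 < gamma t"
    and l: "0 \<le> l i" "l i \<le> 1"
begin

private lemma finite_A: "finite A"
  using A finite_subset by blast

private lemma arms_pos: "0 < K"
  using A i by auto

lemma sum_est_active: "(\<Sum>j\<in>A. est K eta gamma A t L l i j) = l i / (pprob K eta A t L i + gamma t)"
  using finite_A i by (simp add: est_active cong: sum.cong)

lemma est_inactive: "j \<notin> A \<Longrightarrow>
    est K eta gamma A t L l i j = pprob K eta A t L i * (l i / (pprob K eta A t L i + gamma t))"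
  using finite_A i gamma pprob_nonneg[of K eta A t L i] by (simp add: est_def field_simps cong: sum.cong)

lemma est_nonneg: "0 \<le> est K eta gamma A t L l i j"
  using l gamma pprob_nonneg[of K eta A t L i] by (cases "j \<in> A") (auto simp: est_active est_inactive)

private lemma sum_qprob_est:
  fixes f :: "real \<Rightarrow> real"
  defines "Q \<equiv> \<Sum>j\<in>A. qprob K eta t L j" and "p \<equiv> pprob K eta A t L i"
  shows "(\<Sum>j<K. qprob K eta t L j * f (est K eta gamma A t L l i j))
    = p * Q * f (l i / (p + gamma t)) + (1 - p) * Q * f 0 + (1 - Q) * f (p * (l i / (p + gamma t)))"
proof -
  have "Q \<noteq> 0" unfolding Q_def using sum_qprob_pos[OF A i, where eta = eta and t = t and L = L] by simp
  then have q_i: "qprob K eta t L i = p * Q"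
    unfolding p_def pprob_def Q_def[symmetric] using i by simp
  have "(\<Sum>j\<in>A. qprob K eta t L j * f (est K eta gamma A t L l i j))
      = (\<Sum>j\<in>A. qprob K eta t L j * f 0
           + (if j = i then qprob K eta t L i * (f (l i / (p + gamma t)) - f 0) else 0))"
    by (rule sum.cong) (auto simp: est_active p_def algebra_simps)
  also have "\<dots> = Q * f 0 + qprob K eta t L i * (f (l i / (p + gamma t)) - f 0)"
    using finite_A i by (simp add: sum.distrib Q_def sum_distrib_right)
  also have "\<dots> = p * Q * f (l i / (p + gamma t)) + (1 - p) * Q * f 0"
    by (simp add: q_i algebra_simps)
  finally have active: "(\<Sum>j\<in>A. qprob K eta t L j * f (est K eta gamma A t L l i j))
      = p * Q * f (l i / (p + gamma t)) + (1 - p) * Q * f 0" .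
  have "(\<Sum>j\<in>{..<K} - A. qprob K eta t L j * f (est K eta gamma A t L l i j))
      = (\<Sum>j\<in>{..<K} - A. qprob K eta t L j) * f (p * (l i / (p + gamma t)))"
    by (simp add: sum_distrib_right est_inactive p_def)
  also have "(\<Sum>j\<in>{..<K} - A. qprob K eta t L j) = 1 - Q"
    using sum.subset_diff[OF A, of "qprob K eta t L"] sum_softmax[OF arms_pos]
    by (simp add: Q_def qprob_eq_softmax)
  finally have inactive: "(\<Sum>j\<in>{..<K} - A. qprob K eta t L j * f (est K eta gamma A t L l i j))
      = (1 - Q) * f (p * (l i / (p + gamma t)))" .
  show ?thesis
    using active inactive
      sum.subset_diff[OF A finite_lessThan, of "\<lambda>j. qprob K eta t L j * f (est K eta gamma A t L l i j)"] by linarith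
qed

lemma mean_est:
  "(\<Sum>j<K. qprob K eta t L j * est K eta gamma A t L l i j)
     = pprob K eta A t L i * (l i / (pprob K eta A t L i + gamma t))"
  unfolding sum_qprob_est[of "\<lambda>x. x"] by algebra

lemma second_moment_est:
  "(\<Sum>j<K. qprob K eta t L j * (est K eta gamma A t L l i j)\<^sup>2)
     \<le> l i / (pprob K eta A t L i + gamma t)"
proof -
  define p where "p = pprob K eta A t L i"
  define u where "u = l i / (p + gamma t)"
  define Q where "Q = (\<Sum>j\<in>A. qprob K eta t L j)"
  have "p \<le> (\<Sum>j\<in>A. pprob K eta A t L j)"
    unfolding p_def by (rule member_le_sum) (use i finite_A pprob_nonneg in auto)
  also have "\<dots> = 1" using i by (intro sum_pprob[OF A]) auto
  finally have p: "0 \<le> p" "p \<le> 1" by (auto simp: p_def pprob_nonneg)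
  have Q: "Q \<le> 1"
    using sum_mono2[of "{..<K}" A "qprob K eta t L"] A sum_softmax[OF arms_pos] qprob_nonneg
    by (simp add: Q_def qprob_eq_softmax)
  have u: "0 \<le> u" "p * u \<le> 1"
    using p l gamma mult_left_le[of "l i" p] by (auto simp: u_def field_simps)
  have "(\<Sum>j<K. qprob K eta t L j * (est K eta gamma A t L l i j)\<^sup>2)
      = p * Q * u\<^sup>2 + (1 - Q) * (p * u)\<^sup>2"
    using sum_qprob_est[of power2] by (simp add: p_def Q_def u_def)
  also have "\<dots> = p * u\<^sup>2 * (Q + (1 - Q) * p)"
    by (simp add: algebra_simps power2_eq_square)
  also have "\<dots> \<le> p * u\<^sup>2 * 1"
    using p Q mult_left_mono[of p 1 "1 - Q"] by (intro mult_left_mono) auto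
  also have "\<dots> = (p * u) * u" by (simp add: power2_eq_square)
  also have "\<dots> \<le> u" using u mult_right_mono[of "p * u" 1 u] by simp
  finally show ?thesis by (simp add: p_def u_def)
qed

text \<open>The loss of the pulled arm is the \<open>q\<close>-mean of the estimates plus \<open>\<gamma>\<close> times their
  sum over \<open>A\<close>, and an inactive arm is charged exactly that \<open>q\<close>-mean.\<close>
lemma round_regret_le:
  "(if a \<in> A then 1 else 0) * (l i - l a)
     \<le> gamma t * (\<Sum>j\<in>A. est K eta gamma A t L l i j)
        + ((\<Sum>j<K. qprob K eta t L j * est K eta gamma A t L l i j) - est K eta gamma A t L l i a)
        + (if a \<in> A then 1 else 0) * (est K eta gamma A t L l i a - l a)"
proof -
  define p where "p = pprob K eta A t L i"
  define u where "u = l i / (p + gamma t)"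
  have "0 \<le> p" by (simp add: p_def pprob_nonneg)
  then have "p * u + gamma t * u = l i" and "0 \<le> gamma t * u"
    using gamma l unfolding u_def distrib_right[symmetric] by simp_all
  moreover have "(\<Sum>j\<in>A. est K eta gamma A t L l i j) = u"
    and "(\<Sum>j<K. qprob K eta t L j * est K eta gamma A t L l i j) = p * u"
    and "a \<notin> A \<Longrightarrow> est K eta gamma A t L l i a = p * u"
    by (simp_all add: p_def u_def sum_est_active mean_est est_inactive)
  ultimately show ?thesis by (cases "a \<in> A") auto
qed

end

section \<open>The play distribution\<close>

lemma Lcum_cong_take:
  "take s hs = take s hs' \<Longrightarrow> Lcum K eta gamma Act ell s hs = Lcum K eta gamma Act ell s hs'"
proof (induction s)
  case (Suc s)
  have "take s hs = take s hs'"
    using arg_cong[OF Suc.prems, of "take s"] by (simp add: min_def)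
  moreover have "hs ! s = hs' ! s"
    using Suc.prems by (metis lessI nth_take)
  ultimately show ?case using Suc.IH by (simp add: Let_def)
qed simp

text \<open>Inside the locale rounds are counted from \<open>0\<close>: round \<open>s\<close> is round \<open>Suc s\<close> of
  the algorithm, played after the prefix \<open>take s hs\<close> of the pulls.\<close>
locale ftarl =
  fixes K :: nat and eta gamma :: "nat \<Rightarrow> real"
    and Act :: "nat \<Rightarrow> nat list \<Rightarrow> nat set"
    and ell :: "nat \<Rightarrow> nat list \<Rightarrow> nat \<Rightarrow> real"
  assumes eta_pos: "\<And>t. t \<ge> 1 \<Longrightarrow> eta t > 0"
    and gamma_pos: "\<And>t. t \<ge> 1 \<Longrightarrow> gamma t > 0"
    and Act_sub: "\<And>t h. t \<ge> 1 \<Longrightarrow> Act t h \<subseteq> {..<K}"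
    and Act_ne: "\<And>t h. t \<ge> 1 \<Longrightarrow> Act t h \<noteq> {}"
    and ell_range: "\<And>t h i. t \<ge> 1 \<Longrightarrow> i < K \<Longrightarrow> 0 \<le> ell t h i \<and> ell t h i \<le> 1"
begin

lemma K_pos: "0 < K"
  using Act_sub[of 1 "[]"] Act_ne[of 1 "[]"] by fastforce

abbreviation pull_prob :: "nat \<Rightarrow> nat list \<Rightarrow> nat \<Rightarrow> real" where
  "pull_prob s h \<equiv> pprob K eta (Act (Suc s) h) (Suc s) (Lcum K eta gamma Act ell s h)"

lemma pmf_pdist: "pmf (pdist K eta gamma Act ell s h) i = pull_prob s h i"
  unfolding pdist_def
proof (rule pmf_embed_pmf)
  have "(\<integral>\<^sup>+x. ennreal (pull_prob s h x) \<partial>count_space UNIV)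
      = (\<Sum>x\<in>Act (Suc s) h. ennreal (pull_prob s h x))"
    using Act_sub[of "Suc s" h] finite_subset
    by (intro nn_integral_count_space') (auto simp: pprob_notin)
  also have "\<dots> = 1"
    using sum_pprob[OF Act_sub Act_ne] by (simp add: sum_ennreal pprob_nonneg)
  finally show "(\<integral>\<^sup>+x. ennreal (pull_prob s h x) \<partial>count_space UNIV) = 1" .
qed (rule pprob_nonneg)

lemma set_pdist: "set_pmf (pdist K eta gamma Act ell s h) \<subseteq> Act (Suc s) h"
  using pprob_notin by (force simp: set_pmf_iff pmf_pdist)

lemma finite_Act: "t \<ge> 1 \<Longrightarrow> finite (Act t h)"
  using Act_sub finite_subset by blast

lemma finite_set_pdist: "finite (set_pmf (pdist K eta gamma Act ell s h))"
  using finite_Act finite_subset[OF set_pdist] by simp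

lemma expectation_pdist:
  "measure_pmf.expectation (pdist K eta gamma Act ell s h) f
     = (\<Sum>i\<in>Act (Suc s) h. f i * pull_prob s h i)"
proof -
  have "measure_pmf.expectation (pdist K eta gamma Act ell s h) f
      = (\<Sum>i\<in>Act (Suc s) h. f i * pmf (pdist K eta gamma Act ell s h) i)"
    by (rule integral_measure_pmf_real[OF finite_Act]) (use set_pdist in auto)
  then show ?thesis by (simp add: pmf_pdist)
qed

lemma set_play:
  "hs \<in> set_pmf (play K eta gamma Act ell n) \<Longrightarrow>
     length hs = n \<and> (\<forall>s<n. hs ! s \<in> Act (Suc s) (take s hs))"
proof (induction n arbitrary: hs)
  case (Suc n)
  then obtain h i where h: "h \<in> set_pmf (play K eta gamma Act ell n)"
    and "i \<in> set_pmf (pdist K eta gamma Act ell n h)" and hs: "hs = h @ [i]"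
    by auto
  then have i: "i \<in> Act (Suc n) h" using set_pdist by blast
  have len: "length h = n" and pre: "\<forall>s<n. h ! s \<in> Act (Suc s) (take s h)"
    using Suc.IH[OF h] by auto
  have "hs ! s \<in> Act (Suc s) (take s hs)" if "s < Suc n" for s
  proof (cases "s < n")
    case True
    then have "hs ! s = h ! s" and "take s hs = take s h" using hs len by (simp_all add: nth_append)
    then show ?thesis using pre True by simp
  next
    case False
    then have "s = n" using that by simp
    then show ?thesis using i hs len by (simp add: nth_append)
  qed
  moreover have "length hs = Suc n" using hs len by simp
  ultimately show ?case by blast
next
  case 0
  then show ?case by simp
qed

lemma finite_set_play: "finite (set_pmf (play K eta gamma Act ell n))"
proof (induction n)
  case (Suc n)
  then show ?case using finite_set_pdist by simp
qed simp

lemma expectation_exp_sum_le_one: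
  fixes Y :: "nat \<Rightarrow> nat list \<Rightarrow> real"
  assumes adapted: "\<And>s hs hs'. s < n \<Longrightarrow> take (Suc s) hs = take (Suc s) hs' \<Longrightarrow> Y s hs = Y s hs'"
    and step: "\<And>s h. s < n \<Longrightarrow> length h = s \<Longrightarrow>
      (\<Sum>i\<in>Act (Suc s) h. exp (Y s (h @ [i])) * pull_prob s h i) \<le> 1"
  shows "measure_pmf.expectation (play K eta gamma Act ell n) (\<lambda>hs. exp (\<Sum>s<n. Y s hs)) \<le> 1"
  using assms
proof (induction n)
  case (Suc n)
  let ?P = "play K eta gamma Act ell n"
  let ?E = "\<lambda>hs. exp (\<Sum>s<n. Y s hs)"
  have "measure_pmf.expectation (play K eta gamma Act ell (Suc n)) (\<lambda>hs. exp (\<Sum>s<Suc n. Y s hs))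
      = (\<Sum>h\<in>set_pmf ?P. pmf ?P h *\<^sub>R measure_pmf.expectation
          (map_pmf (\<lambda>i. h @ [i]) (pdist K eta gamma Act ell n h)) (\<lambda>hs. exp (\<Sum>s<Suc n. Y s hs)))"
    unfolding play.simps
    by (rule pmf_expectation_bind[OF finite_set_play]) (simp_all add: finite_set_pdist)
  also have "\<dots> = (\<Sum>h\<in>set_pmf ?P. pmf ?P h
      * (\<Sum>i\<in>Act (Suc n) h. exp (\<Sum>s<Suc n. Y s (h @ [i])) * pull_prob n h i))"
    by (simp add: expectation_pdist)
  also have "\<dots> \<le> (\<Sum>h\<in>set_pmf ?P. pmf ?P h * ?E h)"
  proof (intro sum_mono mult_left_mono)
    fix h assume "h \<in> set_pmf ?P"
    then have len: "length h = n" using set_play by blast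
    have "(\<Sum>s<Suc n. Y s (h @ [i])) = (\<Sum>s<n. Y s h) + Y n (h @ [i])" for i
    proof -
      have "Y s (h @ [i]) = Y s h" if "s < n" for s
        using that len by (intro Suc.prems(1)) auto
      then show ?thesis by simp
    qed
    then have "(\<Sum>i\<in>Act (Suc n) h. exp (\<Sum>s<Suc n. Y s (h @ [i])) * pull_prob n h i)
        = ?E h * (\<Sum>i\<in>Act (Suc n) h. exp (Y n (h @ [i])) * pull_prob n h i)"
      unfolding sum_distrib_left by (intro sum.cong) (simp_all add: exp_add)
    also have "\<dots> \<le> ?E h * 1"
      using Suc.prems(2)[of n h] len by (intro mult_left_mono) auto
    finally show "(\<Sum>i\<in>Act (Suc n) h. exp (\<Sum>s<Suc n. Y s (h @ [i])) * pull_prob n h i) \<le> ?E h"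
      by simp
  qed simp
  also have "\<dots> = measure_pmf.expectation ?P ?E"
    by (subst integral_measure_pmf_real[OF finite_set_play]) (auto simp: mult_ac)
  also have "\<dots> \<le> 1"
  proof (rule Suc.IH)
    show "Y s hs = Y s hs'" if "s < n" "take (Suc s) hs = take (Suc s) hs'" for s hs hs'
      using that by (intro Suc.prems(1)) auto
    show "(\<Sum>i\<in>Act (Suc s) h. exp (Y s (h @ [i])) * pull_prob s h i) \<le> 1"
      if "s < n" "length h = s" for s h
      using that by (intro Suc.prems(2)) auto
  qed
  finally show ?case .
qed simp

section \<open>Concentration of the loss estimates\<close>

definition active :: "nat \<Rightarrow> nat list \<Rightarrow> nat set" where
  "active s hs = Act (Suc s) (take s hs)"

definition loss :: "nat \<Rightarrow> nat list \<Rightarrow> nat \<Rightarrow> real" where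
  "loss s hs = ell (Suc s) (take s hs)"

definition loss_est :: "nat \<Rightarrow> nat list \<Rightarrow> nat \<Rightarrow> real" where
  "loss_est s hs = est K eta gamma (active s hs) (Suc s) (Lcum K eta gamma Act ell s hs) (loss s hs) (hs ! s)"

definition deviation :: "(nat \<Rightarrow> nat \<Rightarrow> real) \<Rightarrow> nat \<Rightarrow> nat list \<Rightarrow> real" where
  "deviation \<alpha> n hs = (\<Sum>s<n. \<Sum>j\<in>active s hs. \<alpha> s j * (loss_est s hs j - loss s hs j))"

lemma Lcum_eq_sum_loss_est: "Lcum K eta gamma Act ell n hs j = (\<Sum>s<n. loss_est s hs j)"
  by (induction n) (simp_all add: loss_est_def active_def loss_def Let_def)

lemma round_cong_take:
  assumes "take (Suc s) hs = take (Suc s) hs'"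
  shows "active s hs = active s hs'" "loss s hs = loss s hs'" "loss_est s hs = loss_est s hs'"
proof -
  have "take s hs = take s hs'"
    using arg_cong[OF assms, of "take s"] by (simp add: min_def)
  moreover note Lcum_cong_take[OF this]
  moreover have "hs ! s = hs' ! s"
    using assms by (metis lessI nth_take)
  ultimately show "active s hs = active s hs'" "loss s hs = loss s hs'" "loss_est s hs = loss_est s hs'"
    by (simp_all add: active_def loss_def loss_est_def)
qed

lemma round_snoc:
  assumes "length h = s"
  shows "active s (h @ [i]) = Act (Suc s) h" "loss s (h @ [i]) = ell (Suc s) h"
    "loss_est s (h @ [i])
       = est K eta gamma (Act (Suc s) h) (Suc s) (Lcum K eta gamma Act ell s h) (ell (Suc s) h) i"
  using Lcum_cong_take[of s "h @ [i]" h] unfolding assms[symmetric]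
  by (simp_all add: active_def loss_def loss_est_def)

theorem expectation_exp_deviation_le_one:
  assumes \<alpha>: "\<And>s j. s < n \<Longrightarrow> 0 \<le> \<alpha> s j \<and> \<alpha> s j \<le> 2 * gamma (Suc s)"
  shows "measure_pmf.expectation (play K eta gamma Act ell n) (\<lambda>hs. exp (deviation \<alpha> n hs)) \<le> 1"
  unfolding deviation_def
proof (rule expectation_exp_sum_le_one)
  fix s and hs hs' :: "nat list"
  assume "take (Suc s) hs = take (Suc s) hs'"
  note cong = round_cong_take[OF this]
  show "(\<Sum>j\<in>active s hs. \<alpha> s j * (loss_est s hs j - loss s hs j))
      = (\<Sum>j\<in>active s hs'. \<alpha> s j * (loss_est s hs' j - loss s hs' j))"
    unfolding cong ..
next
  fix s and h :: "nat list"
  assume s: "s < n" and len: "length h = s"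
  have "(\<Sum>i\<in>Act (Suc s) h. exp (\<Sum>j\<in>Act (Suc s) h. \<alpha> s j
            * ((if j = i then ell (Suc s) h i / (pull_prob s h i + gamma (Suc s)) else 0) - ell (Suc s) h j))
          * pull_prob s h i) \<le> 1"
  proof (rule implicit_exploration_exp_moment[where p = "pull_prob s h" and g = "gamma (Suc s)"
        and a = "\<alpha> s" and l = "ell (Suc s) h"])
    show "finite (Act (Suc s) h)" by (simp add: finite_Act)
    show "\<And>i. i \<in> Act (Suc s) h \<Longrightarrow> 0 < pull_prob s h i"
      using pprob_pos[OF Act_sub] by simp
    show "(\<Sum>i\<in>Act (Suc s) h. pull_prob s h i) = 1"
      by (simp add: sum_pprob Act_sub Act_ne)
    show "\<And>j. j \<in> Act (Suc s) h \<Longrightarrow> 0 \<le> \<alpha> s j \<and> \<alpha> s j \<le> 2 * gamma (Suc s)"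
      using \<alpha> s by blast
    show "\<And>j. j \<in> Act (Suc s) h \<Longrightarrow> 0 \<le> ell (Suc s) h j \<and> ell (Suc s) h j \<le> 1"
      using Act_sub[of "Suc s" h] ell_range by auto
  qed (simp add: gamma_pos)
  moreover have "(\<Sum>j\<in>active s (h @ [i]). \<alpha> s j * (loss_est s (h @ [i]) j - loss s (h @ [i]) j))
      = (\<Sum>j\<in>Act (Suc s) h. \<alpha> s j
            * ((if j = i then ell (Suc s) h i / (pull_prob s h i + gamma (Suc s)) else 0) - ell (Suc s) h j))"
    for i using len by (simp add: round_snoc est_active cong: sum.cong)
  ultimately show "(\<Sum>i\<in>Act (Suc s) h. exp (\<Sum>j\<in>active s (h @ [i]).
        \<alpha> s j * (loss_est s (h @ [i]) j - loss s (h @ [i]) j)) * pull_prob s h i) \<le> 1"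
    by (simp only:)
qed

corollary prob_deviation_gt_le:
  assumes "0 < \<epsilon>" and "\<And>s j. s < n \<Longrightarrow> 0 \<le> \<alpha> s j \<and> \<alpha> s j \<le> 2 * gamma (Suc s)"
  shows "measure_pmf.prob (play K eta gamma Act ell n) {hs. ln (1 / \<epsilon>) < deviation \<alpha> n hs} \<le> \<epsilon>"
proof -
  have "deviation \<alpha> n \<in> borel_measurable (measure_pmf (play K eta gamma Act ell n))" by simp
  from measure_pmf.prob_exp_moment_tail[OF this integrable_measure_pmf_finite[OF finite_set_play]
      expectation_exp_deviation_le_one[OF assms(2)] assms(1)]
  show ?thesis by simp
qed

abbreviation weights :: "nat \<Rightarrow> nat list \<Rightarrow> nat \<Rightarrow> real" where
  "weights s hs \<equiv> qprob K eta (Suc s) (Lcum K eta gamma Act ell s hs)"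

lemma weights_eq_softmax: "weights s hs = softmax K (eta (Suc s)) (\<lambda>j. \<Sum>r<s. loss_est r hs j)"
  by (simp add: qprob_eq_softmax Lcum_eq_sum_loss_est[abs_def])

lemma regret_eq_sum_active:
  "regret Act ell T hs a = (\<Sum>s<T. (if a \<in> active s hs then 1 else 0) * (loss s hs (hs ! s) - loss s hs a))"
  by (simp add: regret_def active_def loss_def sum.atLeast1_atMost_eq)

lemma round_assms_of_play:
  assumes "hs \<in> set_pmf (play K eta gamma Act ell T)" and "s < T"
  shows "active s hs \<subseteq> {..<K}" "hs ! s \<in> active s hs" "0 < gamma (Suc s)"
    "0 \<le> loss s hs (hs ! s)" "loss s hs (hs ! s) \<le> 1"
proof -
  show "active s hs \<subseteq> {..<K}" by (simp add: active_def Act_sub)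
  show i: "hs ! s \<in> active s hs" using set_play[OF assms(1)] assms(2) by (simp add: active_def)
  show "0 < gamma (Suc s)" by (simp add: gamma_pos)
  have "hs ! s < K" using i Act_sub by (auto simp: active_def)
  then show "0 \<le> loss s hs (hs ! s)" "loss s hs (hs ! s) \<le> 1"
    using ell_range by (simp_all add: loss_def)
qed

lemma exp_weights_loss_est:
  assumes T: "1 \<le> T" and eta_mono: "\<And>s t. 1 \<le> s \<Longrightarrow> s \<le> t \<Longrightarrow> eta t \<le> eta s"
    and hs: "hs \<in> set_pmf (play K eta gamma Act ell T)" and a: "a < K"
  shows "(\<Sum>s<T. (\<Sum>j<K. weights s hs j * loss_est s hs j) - loss_est s hs a)
    \<le> ln (real K) / eta T + (\<Sum>s<T. eta (Suc s) / 2 * (\<Sum>j\<in>active s hs. loss_est s hs j))"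
proof -
  have nonneg: "0 \<le> loss_est s hs j" if "s < T" for s j
    using est_nonneg[where gamma = gamma and t = "Suc s" and l = "loss s hs", OF round_assms_of_play[OF hs that]]
    by (simp add: loss_est_def)
  have "(\<Sum>s<T. (\<Sum>j<K. weights s hs j * loss_est s hs j)
          - eta (Suc s) / 2 * (\<Sum>j<K. weights s hs j * (loss_est s hs j)\<^sup>2))
      \<le> (\<Sum>s<T. loss_est s hs a) + ln (real K) / eta (Suc (T - 1))"
    unfolding weights_eq_softmax
    by (rule exp_weights_regret[OF K_pos _ _ _ a]) (simp_all add: eta_pos eta_mono nonneg)
  moreover have "(\<Sum>j<K. weights s hs j * (loss_est s hs j)\<^sup>2) \<le> (\<Sum>j\<in>active s hs. loss_est s hs j)"
    if "s < T" for s
    using second_moment_est[where gamma = gamma and t = "Suc s" and l = "loss s hs",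
        OF round_assms_of_play[OF hs that]]
      sum_est_active[where gamma = gamma and t = "Suc s" and l = "loss s hs",
        OF round_assms_of_play[OF hs that]]
    by (simp add: loss_est_def)
  then have "(\<Sum>s<T. eta (Suc s) / 2 * (\<Sum>j<K. weights s hs j * (loss_est s hs j)\<^sup>2))
      \<le> (\<Sum>s<T. eta (Suc s) / 2 * (\<Sum>j\<in>active s hs. loss_est s hs j))"
    by (intro sum_mono mult_left_mono) (auto intro!: less_imp_le[OF eta_pos])
  ultimately show ?thesis
    using T by (simp add: sum_subtractf)
qed

lemma deviation_single_arm:
  "deviation (\<lambda>s j. if j = a then c else 0) n hs
    = c * (\<Sum>s<n. (if a \<in> active s hs then 1 else 0) * (loss_est s hs a - loss s hs a))"
proof -
  have "(\<Sum>j\<in>active s hs. (if j = a then c else 0) * (loss_est s hs j - loss s hs j))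
      = c * ((if a \<in> active s hs then 1 else 0) * (loss_est s hs a - loss s hs a))" for s
    using finite_Act[of "Suc s" "take s hs"]
    by (simp add: if_distrib[of "\<lambda>x. x * _"] sum.delta' active_def cong: if_cong)
  then show ?thesis by (simp add: deviation_def sum_distrib_left)
qed

lemma sum_loss_est_le_deviation:
  assumes "0 \<le> w"
  shows "w * (\<Sum>j\<in>active s hs. loss_est s hs j)
    \<le> (\<Sum>j\<in>active s hs. w * (loss_est s hs j - loss s hs j)) + w * real (card (active s hs))"
proof -
  have "(\<Sum>j\<in>active s hs. loss s hs j) \<le> (\<Sum>j\<in>active s hs. 1)"
    using ell_range Act_sub by (intro sum_mono) (force simp: active_def loss_def)
  then have "w * (\<Sum>j\<in>active s hs. loss s hs j) \<le> w * real (card (active s hs))"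
    using assms by (intro mult_left_mono) auto
  moreover have "(\<Sum>j\<in>active s hs. w * (loss_est s hs j - loss s hs j))
      = w * (\<Sum>j\<in>active s hs. loss_est s hs j) - w * (\<Sum>j\<in>active s hs. loss s hs j)"
    by (simp add: sum_subtractf sum_distrib_left right_diff_distrib)
  ultimately show ?thesis by linarith
qed

definition total_deviation :: "nat \<Rightarrow> nat list \<Rightarrow> real" where
  "total_deviation T = deviation (\<lambda>s j. eta (Suc s) / 2 + gamma (Suc s)) T"

definition arm_deviation :: "nat \<Rightarrow> nat \<Rightarrow> nat list \<Rightarrow> real" where
  "arm_deviation T a = deviation (\<lambda>s j. if j = a then 2 * gamma T else 0) T"

theorem regret_le_deviations:
  assumes T: "1 \<le> T" and eta_mono: "\<And>s t. 1 \<le> s \<Longrightarrow> s \<le> t \<Longrightarrow> eta t \<le> eta s"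
    and hs: "hs \<in> set_pmf (play K eta gamma Act ell T)" and a: "a < K"
  shows "regret Act ell T hs a \<le> ln (real K) / eta T + arm_deviation T a hs / (2 * gamma T)
      + total_deviation T hs + (\<Sum>t=1..T. (eta t / 2 + gamma t) * real (card (Act t (take (t - 1) hs))))"
proof -
  define I where "I s = (if a \<in> active s hs then 1 else 0 :: real)" for s
  define u where "u s = (\<Sum>j\<in>active s hs. loss_est s hs j)" for s
  have "regret Act ell T hs a \<le> (\<Sum>s<T. gamma (Suc s) * u s)
      + (\<Sum>s<T. (\<Sum>j<K. weights s hs j * loss_est s hs j) - loss_est s hs a)
      + (\<Sum>s<T. I s * (loss_est s hs a - loss s hs a))"
    unfolding regret_eq_sum_active sum.distrib[symmetric]
  proof (intro sum_mono)
    fix s assume "s \<in> {..<T}"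
    then show "(if a \<in> active s hs then 1 else 0) * (loss s hs (hs ! s) - loss s hs a)
        \<le> gamma (Suc s) * u s + ((\<Sum>j<K. weights s hs j * loss_est s hs j) - loss_est s hs a)
          + I s * (loss_est s hs a - loss s hs a)"
      using round_regret_le[where gamma = gamma and t = "Suc s" and l = "loss s hs",
          OF round_assms_of_play[OF hs]]
      by (simp add: I_def u_def loss_est_def)
  qed
  moreover have "(\<Sum>s<T. (\<Sum>j<K. weights s hs j * loss_est s hs j) - loss_est s hs a)
      \<le> ln (real K) / eta T + (\<Sum>s<T. eta (Suc s) / 2 * u s)"
    unfolding u_def by (rule exp_weights_loss_est[OF T eta_mono hs a])
  moreover have "(\<Sum>s<T. I s * (loss_est s hs a - loss s hs a)) = arm_deviation T a hs / (2 * gamma T)"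
    using gamma_pos[of T] T by (simp add: arm_deviation_def deviation_single_arm I_def)
  moreover have "(\<Sum>s<T. (eta (Suc s) / 2 + gamma (Suc s)) * u s)
      \<le> total_deviation T hs + (\<Sum>s<T. (eta (Suc s) / 2 + gamma (Suc s)) * real (card (active s hs)))"
    unfolding total_deviation_def deviation_def sum.distrib[symmetric] u_def
    using eta_pos gamma_pos
    by (intro sum_mono sum_loss_est_le_deviation) (simp add: add_nonneg_nonneg less_imp_le)
  moreover have "(\<Sum>s<T. gamma (Suc s) * u s) + (\<Sum>s<T. eta (Suc s) / 2 * u s)
      = (\<Sum>s<T. (eta (Suc s) / 2 + gamma (Suc s)) * u s)"
    by (simp add: sum.distrib[symmetric] algebra_simps)
  moreover have "(\<Sum>s<T. (eta (Suc s) / 2 + gamma (Suc s)) * real (card (active s hs)))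
      = (\<Sum>t=1..T. (eta t / 2 + gamma t) * real (card (Act t (take (t - 1) hs))))"
    by (simp add: active_def sum.atLeast1_atMost_eq)
  ultimately show ?thesis by linarith
qed

lemma prob_total_deviation_gt_le:
  assumes "0 < \<epsilon>" and eta_gamma: "\<And>t. t \<ge> 1 \<Longrightarrow> eta t \<le> 2 * gamma t"
  shows "measure_pmf.prob (play K eta gamma Act ell T) {hs. ln (1 / \<epsilon>) < total_deviation T hs} \<le> \<epsilon>"
  unfolding total_deviation_def
proof (rule prob_deviation_gt_le[OF assms(1)])
  show "0 \<le> eta (Suc s) / 2 + gamma (Suc s) \<and> eta (Suc s) / 2 + gamma (Suc s) \<le> 2 * gamma (Suc s)" for s
    using eta_pos[of "Suc s"] gamma_pos[of "Suc s"] eta_gamma[of "Suc s"] by simp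
qed

lemma prob_arm_deviation_gt_le:
  assumes "0 < \<epsilon>" and gamma_mono: "\<And>s t. 1 \<le> s \<Longrightarrow> s \<le> t \<Longrightarrow> gamma t \<le> gamma s"
  shows "measure_pmf.prob (play K eta gamma Act ell T) {hs. ln (1 / \<epsilon>) < arm_deviation T a hs} \<le> \<epsilon>"
  unfolding arm_deviation_def
proof (rule prob_deviation_gt_le[OF assms(1)])
  show "0 \<le> (if j = a then 2 * gamma T else 0) \<and> (if j = a then 2 * gamma T else 0) \<le> 2 * gamma (Suc s)"
    if "s < T" for s j
    using gamma_pos[of T] gamma_mono[of "Suc s" T] that by simp
qed

lemma prob_large_deviation_le:
  assumes delta: "0 < delta" and eta_gamma: "\<And>t. t \<ge> 1 \<Longrightarrow> eta t \<le> 2 * gamma t"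
    and gamma_mono: "\<And>s t. 1 \<le> s \<Longrightarrow> s \<le> t \<Longrightarrow> gamma t \<le> gamma s"
  shows "measure_pmf.prob (play K eta gamma Act ell T)
    ({hs. ln (3 / delta) < total_deviation T hs} \<union> (\<Union>a<K. {hs. ln (3 * K / delta) < arm_deviation T a hs}))
    \<le> 2 * delta / 3"
proof -
  let ?P = "play K eta gamma Act ell T"
  let ?Btotal = "{hs. ln (3 / delta) < total_deviation T hs}"
  let ?Barm = "\<lambda>a. {hs. ln (3 * K / delta) < arm_deviation T a hs}"
  have "measure_pmf.prob ?P (?Btotal \<union> (\<Union>a<K. ?Barm a))
      \<le> measure_pmf.prob ?P ?Btotal + measure_pmf.prob ?P (\<Union>a<K. ?Barm a)"
    by (rule measure_Un_le) simp_all
  also have "\<dots> \<le> measure_pmf.prob ?P ?Btotal + (\<Sum>a<K. measure_pmf.prob ?P (?Barm a))"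
    by (intro add_left_mono measure_pmf.finite_measure_subadditive_finite) auto
  also have "\<dots> \<le> delta / 3 + (\<Sum>a<K. delta / (3 * K))"
    using prob_total_deviation_gt_le[of "delta / 3", OF _ eta_gamma]
      prob_arm_deviation_gt_le[of "delta / (3 * K)", OF _ gamma_mono] delta K_pos
    by (intro add_mono sum_mono) simp_all
  also have "\<dots> = 2 * delta / 3" using K_pos by simp
  finally show ?thesis .
qed

end

theorem theoremA3:
  fixes K T :: nat and delta :: real
    and eta gamma :: "nat \<Rightarrow> real"
    and Act :: "nat \<Rightarrow> nat list \<Rightarrow> nat set"
    and ell :: "nat \<Rightarrow> nat list \<Rightarrow> nat \<Rightarrow> real"
  assumes K: "K \<ge> 2"
    and T: "T \<ge> 1"
    and delta: "0 < delta" "delta < 1"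
    and eta_pos: "\<And>t. t \<ge> 1 \<Longrightarrow> eta t > 0"
    and gamma_pos: "\<And>t. t \<ge> 1 \<Longrightarrow> gamma t > 0"
    and eta_mono: "\<And>s t. 1 \<le> s \<Longrightarrow> s \<le> t \<Longrightarrow> eta t \<le> eta s"
    and gamma_mono: "\<And>s t. 1 \<le> s \<Longrightarrow> s \<le> t \<Longrightarrow> gamma t \<le> gamma s"
    and eta_gamma: "\<And>t. t \<ge> 1 \<Longrightarrow> eta t \<le> 2 * gamma t"
    and Act_sub: "\<And>t h. t \<ge> 1 \<Longrightarrow> Act t h \<subseteq> {..<K}"
    and Act_ne: "\<And>t h. t \<ge> 1 \<Longrightarrow> Act t h \<noteq> {}"
    and ell_range: "\<And>t h i. t \<ge> 1 \<Longrightarrow> i < K \<Longrightarrow> 0 \<le> ell t h i \<and> ell t h i \<le> 1"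
  shows "measure_pmf.prob (play K eta gamma Act ell T)
           {hs. Max ((regret Act ell T hs) ` {..<K})
                  \<le> ln (real K) / eta T + ln (3 * real K / delta) / (2 * gamma T)
                     + ln (3 / delta)
                     + (\<Sum>t=1..T. (eta t / 2 + gamma t) * real (card (Act t (take (t - 1) hs))))}
         \<ge> 1 - delta"
proof -
  interpret ftarl K eta gamma Act ell
    using eta_pos gamma_pos Act_sub Act_ne ell_range by unfold_locales auto
  let ?bad = "{hs. ln (3 / delta) < total_deviation T hs}
    \<union> (\<Union>a<K. {hs. ln (3 * K / delta) < arm_deviation T a hs})"
  show ?thesis
  proof (rule order_trans[OF _ prob_ge_one_minus_of_set_pmf_diff[where B = ?bad]], goal_cases)
    case 1
    show ?case using prob_large_deviation_le[OF delta(1) eta_gamma gamma_mono, where T = T] delta by simp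
  next
    case 2
    have "regret Act ell T hs a \<le> ln (real K) / eta T + ln (3 * real K / delta) / (2 * gamma T)
        + ln (3 / delta) + (\<Sum>t=1..T. (eta t / 2 + gamma t) * real (card (Act t (take (t - 1) hs))))"
      if "hs \<in> set_pmf (play K eta gamma Act ell T) - ?bad" "a < K" for hs a
      using regret_le_deviations[OF T eta_mono, of hs a] that gamma_pos[OF T]
        divide_right_mono[of "arm_deviation T a hs" "ln (3 * real K / delta)" "2 * gamma T"]
      by (auto simp: not_less)
    then show ?case using K_pos by (intro subsetI CollectI, subst Max_le_iff) auto
  qed
qed

end
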